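(* Let $r\ge 1$ be an integer, $\tau_0>0$, and let $k_a$ satisfy $rk_a\in(0,1)$. Let $$h_w> \frac{4\tau_0}{(1+r)(1+rk_a)}.$$ Then there exist $k_v>0$, $k_p>0$ such that for every $\tau\in[0,\tau_0]$, the polynomial $\tau s^3+s^2+\big(rk_v+\tfrac{r(r+1)}{2}k_ph_w\big)s+rk_p$ is Hurwitz and $$r\,\sup_{\omega\in\mathbb{R}}|H_0(j\omega;\tau)|\le 1,\qquad H_0(s;\tau)=\frac{k_as^2+k_vs+k_p}{\tau s^3+s^2+\big(rk_v+\tfrac{r(r+1)}{2}k_ph_w\big)s+rk_p}.$$ Consequently, for every $\tau\in[0,\tau_0]$ and every $\omega\in\mathbb{R}$, all roots $z$ of $P(z;\omega)=z^r-H_0(j\omega;\tau)\sum_{l=1}^r z^{r-l}$ satisfy $|z|\le 1$ (i.e. the platoon is robustly string stable).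
   Context: Platoon of identical vehicles with dynamics $\ddot x_i=a_i$, $\tau\dot a_i+a_i=u_i$, parasitic lag $\tau\in[0,\tau_0]$, each vehicle using position, velocity and acceleration of its $r$ immediate predecessors via the control law $u_i=\sum_{l=1}^r\big[k_a a_{i-l}-k_v(v_i-v_{i-l})-k_p(x_i-x_{i-l}+d_l+l h_w v_i)\big]$ (identical gains for all $l$), where $d_l$ is the standstill distance to the $l$-th predecessor. With spacing errors $e_i=x_i-x_{i-1}+d+h_wv_i$, the errors propagate as $E_i(s)=H_0(s)\sum_{l=1}^rE_{i-l}(s)$. Robust string stability means the spectral radius of the characteristic polynomial $P(z;\omega)$ is at most $1$ for all $\omega$ and all $\tau\in[0,\tau_0]$. *)

theory Defs
  imports "HOL-Analysis.Analysis" "HOL-Computational_Algebra.Polynomial"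
begin

definition hurwitz :: "complex poly \<Rightarrow> bool" where
  "hurwitz p \<longleftrightarrow> p \<noteq> 0 \<and> (\<forall>s. poly p s = 0 \<longrightarrow> Re s < 0)"

definition den_poly :: "nat \<Rightarrow> real \<Rightarrow> real \<Rightarrow> real \<Rightarrow> real \<Rightarrow> complex poly" where
  "den_poly r kv kp hw tau =
     [: complex_of_real (real r * kp),
        complex_of_real (real r * kv + real r * (real r + 1) / 2 * kp * hw),
        1,
        complex_of_real tau :]"

definition H0 :: "nat \<Rightarrow> real \<Rightarrow> real \<Rightarrow> real \<Rightarrow> real \<Rightarrow> real \<Rightarrow> complex \<Rightarrow> complex" where
  "H0 r ka kv kp hw tau s =
     (complex_of_real ka * s^2 + complex_of_real kv * s + complex_of_real kp)
     / poly (den_poly r kv kp hw tau) s"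

definition charP :: "nat \<Rightarrow> real \<Rightarrow> real \<Rightarrow> real \<Rightarrow> real \<Rightarrow> real \<Rightarrow> real \<Rightarrow> complex \<Rightarrow> complex" where
  "charP r ka kv kp hw tau \<omega> z =
     z ^ r - H0 r ka kv kp hw tau (\<i> * complex_of_real \<omega>) * (\<Sum>l=1..r. z ^ (r - l))"

end

theory Submission imports Defs begin

text \<open>
  Write \<open>A\<close> for the linear coefficient of the denominator. The cubic
  \<open>tau s^3 + s^2 + A s + B\<close> with positive coefficients is Hurwitz as soon as \<open>A > tau B\<close>
  (Routh-Hurwitz). On the imaginary axis, \<open>|D(j w)|^2 - r^2 |N(j w)|^2\<close> is \<open>w^2\<close> times a
  quadratic in \<open>w^2\<close> with coefficients \<open>tau^2\<close>, \<open>1 - (r ka)^2 - 2 A tau\<close> and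
  \<open>A^2 - (r kv)^2 - 2 r kp (1 - r ka)\<close>. Choosing the gains so that
  \<open>A = (1 - (r ka)^2) / (2 tau0)\<close> makes the middle coefficient nonnegative for all
  \<open>tau \<le> tau0\<close>; the lower bound on \<open>hw\<close> leaves exactly enough room to also make the
  constant coefficient nonnegative and \<open>A > tau0 r kp\<close>. Finally, if \<open>r |H| \<le> 1\<close> and
  \<open>|z| > 1\<close>, then \<open>|H| \<Sum>l=1..r. |z|^(r-l) < |z|^r\<close>, so no such \<open>z\<close> is a root of \<open>P\<close>.
\<close>

lemma hurwitz_cubicI:
  fixes a b tau :: real
  assumes "tau \<ge> 0" "a > 0" "b > 0" "a > tau * b"
  shows "hurwitz [: complex_of_real b, complex_of_real a, 1, complex_of_real tau :]"
  unfolding hurwitz_def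
proof (intro conjI allI impI)
  show "[: complex_of_real b, complex_of_real a, 1, complex_of_real tau :] \<noteq> 0" by simp
  fix s assume root: "poly [: complex_of_real b, complex_of_real a, 1, complex_of_real tau :] s = 0"
  define x y where "x = Re s" and "y = Im s"
  have s: "s = Complex x y" by (simp add: x_def y_def)
  have re: "b + a*x + x^2 - y^2 + tau*(x^3 - 3*x*y^2) = 0"
    using arg_cong[OF root, of Re] unfolding s by (simp add: power2_eq_square power3_eq_cube algebra_simps)
  have im: "y * (a + 2*x + tau*(3*x^2 - y^2)) = 0"
    using arg_cong[OF root, of Im] unfolding s by (simp add: power2_eq_square power3_eq_cube algebra_simps)
  show "Re s < 0"
  proof (rule ccontr)
    assume "\<not> Re s < 0"
    hence x: "x \<ge> 0" by (simp add: x_def)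
    show False
    proof (cases "y = 0")
      case True
      with re have "b + a*x + x^2 + tau*x^3 = 0" by simp
      moreover have "a*x \<ge> 0" "tau*x^3 \<ge> 0" using x assms by auto
      ultimately show False using \<open>b > 0\<close> by (smt (verit) zero_le_power2)
    next
      case False
      with im have im': "a + 2*x + tau*(3*x^2 - y^2) = 0" by simp
      \<comment> \<open>eliminating \<open>y\<^sup>2\<close> between the real and imaginary parts\<close>
      have "tau*(b + a*x + x^2 - y^2 + tau*(x^3 - 3*x*y^2)) - (3*tau*x + 1)*(a + 2*x + tau*(3*x^2 - y^2))
         = tau*b - a - (8*tau^2*x^3 + 8*tau*x^2 + 2*tau*a*x + 2*x)"
        by (simp add: algebra_simps power2_eq_square power3_eq_cube)
      hence "tau*b - a = 8*tau^2*x^3 + 8*tau*x^2 + 2*tau*a*x + 2*x" using re im' by simp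
      moreover have "8*tau^2*x^3 + 8*tau*x^2 + 2*tau*a*x + 2*x \<ge> 0" using x assms by simp
      ultimately show False using \<open>a > tau * b\<close> by linarith
    qed
  qed
qed

lemma norm_le_1_if_power_eq_mult_sum_powers:
  fixes h z :: complex and n :: nat
  assumes gain: "real n * cmod h \<le> 1" and eq: "z^n = h * (\<Sum>l=1..n. z^(n-l))"
  shows "cmod z \<le> 1"
proof (rule ccontr)
  assume "\<not> cmod z \<le> 1"
  hence z: "cmod z > 1" by simp
  have n: "n \<ge> 1" using eq by (cases n) auto
  have "real n * cmod z ^ n = real n * cmod (h * (\<Sum>l=1..n. z^(n-l)))"
    by (metis eq norm_power)
  also have "\<dots> \<le> (real n * cmod h) * (\<Sum>l=1..n. cmod z^(n-l))"
    by (simp add: norm_mult mult.assoc mult_left_mono norm_sum norm_power sum_norm_le)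
  also have "\<dots> \<le> (\<Sum>l=1..n. cmod z^(n-l))"
    using gain by (intro mult_left_le_one_le sum_nonneg) auto
  also have "\<dots> < (\<Sum>l=1..n. cmod z^n)"
    using n z by (intro sum_strict_mono power_strict_increasing) auto
  finally show False by simp
qed

lemma bdd_above_scaled_SUP_le_1:
  fixes f :: "'a \<Rightarrow> real"
  assumes "c > 0" and "\<And>x. c * f x \<le> 1"
  shows "bdd_above (range f)" and "c * (SUP x. f x) \<le> 1"
proof -
  have bound: "f x \<le> 1 / c" for x
    using assms by (simp add: field_simps)
  thus "bdd_above (range f)" by (intro bdd_aboveI2)
  have "(SUP x. f x) \<le> 1 / c" using bound by (intro cSUP_least) auto
  thus "c * (SUP x. f x) \<le> 1" using \<open>c > 0\<close> by (simp add: field_simps)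
qed

definition den_lin_coeff :: "real \<Rightarrow> real \<Rightarrow> real \<Rightarrow> real \<Rightarrow> real" where
  "den_lin_coeff R kv kp hw = R * kv + R * (R + 1) / 2 * kp * hw"

lemma den_poly_eq:
  "den_poly r kv kp hw tau =
     [: complex_of_real (real r * kp), complex_of_real (den_lin_coeff (real r) kv kp hw), 1,
        complex_of_real tau :]"
  by (simp add: den_poly_def den_lin_coeff_def)

lemma den_minus_num_imag_axis:
  fixes r :: nat and ka kv kp hw tau w :: real
  defines "R \<equiv> real r" and "A \<equiv> den_lin_coeff (real r) kv kp hw"
  shows "(cmod (poly (den_poly r kv kp hw tau) (\<i> * complex_of_real w)))^2
           - R^2 * (cmod (complex_of_real ka * (\<i> * complex_of_real w)^2
                          + complex_of_real kv * (\<i> * complex_of_real w) + complex_of_real kp))^2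
         = w^2 * (tau^2 * w^4 + (1 - (R*ka)^2 - 2*A*tau) * w^2
                  + (A^2 - (R*kv)^2 - 2*R*kp*(1 - R*ka)))"
  unfolding den_poly_eq cmod_power2 R_def A_def
  by (simp add: power2_eq_square power3_eq_cube power4_eq_xxxx algebra_simps)

lemma H0_imag_axis_gain_le:
  fixes r :: nat and ka kv kp hw tau w :: real
  defines "R \<equiv> real r" and "A \<equiv> den_lin_coeff (real r) kv kp hw"
  assumes "tau \<ge> 0" and "2*A*tau \<le> 1 - (R*ka)^2"
    and "(R*kv)^2 + 2*R*kp*(1 - R*ka) \<le> A^2"
  shows "real r * cmod (H0 r ka kv kp hw tau (\<i> * complex_of_real w)) \<le> 1"
proof -
  define N where "N = complex_of_real ka * (\<i> * complex_of_real w)^2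
                      + complex_of_real kv * (\<i> * complex_of_real w) + complex_of_real kp"
  define D where "D = poly (den_poly r kv kp hw tau) (\<i> * complex_of_real w)"
  have "0 \<le> w^2 * (tau^2 * w^4 + (1 - (R*ka)^2 - 2*A*tau) * w^2
                   + (A^2 - (R*kv)^2 - 2*R*kp*(1 - R*ka)))"
    using assms by (intro mult_nonneg_nonneg add_nonneg_nonneg) auto
  hence "(R * cmod N)^2 \<le> (cmod D)^2"
    using den_minus_num_imag_axis[of r kv kp hw tau w ka]
    by (simp add: N_def D_def R_def A_def power_mult_distrib)
  hence "R * cmod N \<le> cmod D" by (rule power2_le_imp_le) simp
  moreover have "H0 r ka kv kp hw tau (\<i> * complex_of_real w) = N / D"
    by (simp add: H0_def N_def D_def)
  ultimately show ?thesis
    by (cases "D = 0") (simp_all add: R_def norm_divide divide_le_eq)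
qed

lemma robust_gains_exist:
  fixes R tau0 ka hw :: real
  assumes "R > 0" and "tau0 > 0" and "0 < R * ka" and "R * ka < 1"
    and "hw > 4 * tau0 / ((1 + R) * (1 + R * ka))"
  obtains kv kp where "kv > 0" "kp > 0"
    "2 * den_lin_coeff R kv kp hw * tau0 \<le> 1 - (R*ka)^2"
    "(R*kv)^2 + 2*R*kp*(1 - R*ka) \<le> (den_lin_coeff R kv kp hw)^2"
    "tau0 * (R*kp) < den_lin_coeff R kv kp hw"
proof -
  define e p where "e = 1 - R*ka" and "p = 1 + R*ka"
  have e: "e > 0" and p: "p > 0" "p < 2" using assms by (auto simp: e_def p_def)
  have hw: "hw > 0"
    using assms(5) assms(1,2) p by (smt (verit) divide_pos_pos mult_pos_pos p_def)
  define q where "q = 2 / ((1 + R) * hw)"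
  have q: "q > 0" and q_hw: "(1 + R) * hw * q = 2"
    using hw \<open>R > 0\<close> by (simp_all add: q_def)
  have "4 * tau0 < hw * ((1 + R) * p)"
    using assms(5) \<open>R > 0\<close> p by (simp add: p_def pos_divide_less_eq)
  hence tau0_q: "2 * tau0 * q < p"
    using hw \<open>R > 0\<close> by (simp add: q_def pos_divide_less_eq mult_ac)
  \<comment> \<open>\<open>A\<close> is the largest linear coefficient allowed by the lag, \<open>M\<close> the smallest allowed by the spacing\<close>
  define A M where "A = e * p / (2 * tau0)" and "M = 2 * e * q"
  have M: "M > 0" using e q by (simp add: M_def)
  have "M * tau0 < e * p" using mult_strict_left_mono[OF tau0_q e] by (simp add: M_def mult_ac)
  hence "M < 2 * A" using \<open>tau0 > 0\<close> by (simp add: A_def field_simps)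
  define kv kp where "kv = (A/2 + M/4) / R" and "kp = (A/2 - M/4) * q / R"
  have Rkv: "R * kv = A/2 + M/4" and Rkp: "R * kp = (A/2 - M/4) * q"
    using \<open>R > 0\<close> by (simp_all add: kv_def kp_def)
  have kv: "kv > 0" and kp: "kp > 0"
    using \<open>M < 2 * A\<close> M q \<open>R > 0\<close> by (auto simp: kv_def kp_def)
  have "R * (R + 1) / 2 * kp * hw = (R * kp) * ((1 + R) * hw) / 2" by (simp add: algebra_simps)
  also have "\<dots> = (A/2 - M/4) * ((1 + R) * hw * q) / 2" by (simp add: Rkp mult_ac)
  also have "\<dots> = A/2 - M/4" by (simp add: q_hw)
  finally have lin: "den_lin_coeff R kv kp hw = A"
    unfolding den_lin_coeff_def Rkv by linarith
  show ?thesis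
  proof
    show "2 * den_lin_coeff R kv kp hw * tau0 \<le> 1 - (R*ka)^2"
    proof -
      have "2 * A * tau0 = e * p" using \<open>tau0 > 0\<close> by (simp add: A_def)
      thus ?thesis by (simp add: lin e_def p_def power2_eq_square algebra_simps)
    qed
    have "2*R*kp*e = (R*kp) * (2*e)" by simp
    also have "\<dots> = (A/2 - M/4) * M" by (simp add: Rkp M_def)
    finally have "A^2 - ((R*kv)^2 + 2*R*kp*e) = 3/4 * (A - M/2)^2"
      by (simp add: Rkv power2_eq_square algebra_simps)
    thus "(R*kv)^2 + 2*R*kp*(1 - R*ka) \<le> (den_lin_coeff R kv kp hw)^2"
      using zero_le_power2[of "A - M/2"] unfolding lin e_def by linarith
    have "tau0 * q < 1" using tau0_q p by simp
    hence "tau0 * (R*kp) < A/2 - M/4"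
      using \<open>M < 2 * A\<close> by (simp add: Rkp mult.left_commute)
    thus "tau0 * (R*kp) < den_lin_coeff R kv kp hw" using M \<open>M < 2 * A\<close> unfolding lin by linarith
  qed (use kv kp in auto)
qed

theorem theorem2:
  fixes r :: nat and tau0 ka hw :: real
  assumes "r \<ge> 1" and "tau0 > 0"
    and "0 < real r * ka" and "real r * ka < 1"
    and "hw > 4 * tau0 / ((1 + real r) * (1 + real r * ka))"
  shows "\<exists>kv kp. kv > 0 \<and> kp > 0 \<and>
    (\<forall>tau \<in> {0..tau0}.
       hurwitz (den_poly r kv kp hw tau) \<and>
       bdd_above (range (\<lambda>\<omega>::real. cmod (H0 r ka kv kp hw tau (\<i> * complex_of_real \<omega>)))) \<and>
       real r * (SUP \<omega>::real. cmod (H0 r ka kv kp hw tau (\<i> * complex_of_real \<omega>))) \<le> 1) \<and>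
    (\<forall>tau \<in> {0..tau0}. \<forall>\<omega>::real. \<forall>z::complex.
       charP r ka kv kp hw tau \<omega> z = 0 \<longrightarrow> cmod z \<le> 1)"
proof -
  have r: "real r > 0" using assms(1) by simp
  obtain kv kp where kv: "kv > 0" and kp: "kp > 0"
    and lag: "2 * den_lin_coeff (real r) kv kp hw * tau0 \<le> 1 - (real r * ka)^2"
    and spacing: "(real r * kv)^2 + 2 * real r * kp * (1 - real r * ka)
                    \<le> (den_lin_coeff (real r) kv kp hw)^2"
    and routh: "tau0 * (real r * kp) < den_lin_coeff (real r) kv kp hw"
    using robust_gains_exist[OF r assms(2-5)] .
  have lin_pos: "den_lin_coeff (real r) kv kp hw > 0"
    using routh assms(2) r kp by (smt (verit) mult_pos_pos)
  have gain: "real r * cmod (H0 r ka kv kp hw tau (\<i> * complex_of_real w)) \<le> 1"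
    if "tau \<in> {0..tau0}" for tau w
    using that lag lin_pos spacing
    by (intro H0_imag_axis_gain_le) (auto intro: order_trans[OF mult_left_mono, rotated])
  have hurw: "hurwitz (den_poly r kv kp hw tau)" if "tau \<in> {0..tau0}" for tau
    unfolding den_poly_eq using that r kp lin_pos routh
    by (intro hurwitz_cubicI) (auto intro: le_less_trans[OF mult_right_mono, rotated])
  show ?thesis
  proof (intro exI conjI ballI allI impI)
    fix tau assume tau: "tau \<in> {0..tau0}"
    show "hurwitz (den_poly r kv kp hw tau)" using hurw[OF tau] .
    show "bdd_above (range (\<lambda>\<omega>::real. cmod (H0 r ka kv kp hw tau (\<i> * complex_of_real \<omega>))))"
      and "real r * (SUP \<omega>::real. cmod (H0 r ka kv kp hw tau (\<i> * complex_of_real \<omega>))) \<le> 1"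
      by (rule bdd_above_scaled_SUP_le_1[OF r gain[OF tau]])+
  next
    fix tau w z assume tau: "tau \<in> {0..tau0}" and "charP r ka kv kp hw tau w z = 0"
    thus "cmod z \<le> 1"
      by (intro norm_le_1_if_power_eq_mult_sum_powers[OF gain[OF tau, of w]]) (simp add: charP_def)
  qed (use kv kp in auto)
qed

end
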